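(* For every integer $m\ge3$, $\mathrm{sn}(\mathrm{SUD}_m)=\underline{\mathrm{lcs}}(\mathrm{SUD}_m)=m^4-3m^2+3m$.
   Context: $\mathrm{SUD}_m$ is the hypergraph whose vertex set is the $m^2\times m^2$ grid $[m^2]\times[m^2]$ and whose $3m^2$ hyperedges are the $m^2$ rows, the $m^2$ columns, and the $m^2$ disjoint $m\times m$ blocks (the sets $\{(a,b): \lceil a/m\rceil=i,\lceil b/m\rceil=j\}$ for $i,j\in[m]$). A (weak) colouring of a hypergraph with $k$ colours is a map from its vertex set to $[k]$ such that no hyperedge is monochromatic; $\chi$ is the least $k$ for which such a colouring exists (here $\chi(\mathrm{SUD}_m)=2$). For a $\chi$-colouring $c$, a vertex set $S$ is a determining set if no other $\chi$-colouring agrees with $c$ on $S$; a critical set is an inclusion-minimal determining set. $\mathrm{scs}(H,c)$ and $\mathrm{lcs}(H,c)$ are the sizes of a smallest resp. largest critical set for $(H,c)$; $\mathrm{sn}(H)=\min_c\mathrm{scs}(H,c)$ and $\underline{\mathrm{lcs}}(H)=\min_c\mathrm{lcs}(H,c)$, minima over all $\chi(H)$-colourings $c$. *)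

theory Defs
  imports Main
begin

text \<open>Colourings are compared on V only.\<close>

type_synonym 'a hypergraph = "'a set \<times> 'a set set"

definition is_colouring :: "'a hypergraph \<Rightarrow> nat \<Rightarrow> ('a \<Rightarrow> nat) \<Rightarrow> bool" where
  "is_colouring H k c \<longleftrightarrow>
     (\<forall>v\<in>fst H. c v \<in> {1..k}) \<and>
     (\<forall>e\<in>snd H. \<not> (\<exists>i. \<forall>v\<in>e. c v = i))"

definition chi :: "'a hypergraph \<Rightarrow> nat" where
  "chi H = (LEAST k. \<exists>c. is_colouring H k c)"

definition chi_colouring :: "'a hypergraph \<Rightarrow> ('a \<Rightarrow> nat) \<Rightarrow> bool" where
  "chi_colouring H c \<longleftrightarrow> is_colouring H (chi H) c"

definition determining_set :: "'a hypergraph \<Rightarrow> ('a \<Rightarrow> nat) \<Rightarrow> 'a set \<Rightarrow> bool" where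
  "determining_set H c S \<longleftrightarrow> S \<subseteq> fst H \<and>
     (\<forall>c'. chi_colouring H c' \<and> (\<forall>v\<in>S. c' v = c v) \<longrightarrow> (\<forall>v\<in>fst H. c' v = c v))"

definition critical_set :: "'a hypergraph \<Rightarrow> ('a \<Rightarrow> nat) \<Rightarrow> 'a set \<Rightarrow> bool" where
  "critical_set H c S \<longleftrightarrow> determining_set H c S \<and> (\<forall>T. T \<subset> S \<longrightarrow> \<not> determining_set H c T)"

definition scs :: "'a hypergraph \<Rightarrow> ('a \<Rightarrow> nat) \<Rightarrow> nat" where
  "scs H c = Min {card S | S. critical_set H c S}"

definition lcs :: "'a hypergraph \<Rightarrow> ('a \<Rightarrow> nat) \<Rightarrow> nat" where
  "lcs H c = Max {card S | S. critical_set H c S}"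

definition sn :: "'a hypergraph \<Rightarrow> nat" where
  "sn H = Min {scs H c | c. chi_colouring H c}"

definition lcs_lower :: "'a hypergraph \<Rightarrow> nat" where
  "lcs_lower H = Min {lcs H c | c. chi_colouring H c}"

definition SUD :: "nat \<Rightarrow> (nat \<times> nat) hypergraph" where
  "SUD m = ({1..m^2} \<times> {1..m^2},
     {{(a, b) | b. b \<in> {1..m^2}} | a. a \<in> {1..m^2}} \<union>
     {{(a, b) | a. a \<in> {1..m^2}} | b. b \<in> {1..m^2}} \<union>
     {{(a, b) | a b. a \<in> {1..m^2} \<and> b \<in> {1..m^2} \<and>
                     (a + m - 1) div m = i \<and> (b + m - 1) div m = j} | i j. i \<in> {1..m} \<and> j \<in> {1..m}})"

end

theory Submission
  imports Defs
begin

text \<open>Call v lonely in a hyperedge e if no other vertex of e has the colour of v.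
  Lower bound: if S determines a 2-colouring c, every vertex outside S is lonely in some row,
  column or block, since otherwise flipping its colour gives a second 2-colouring agreeing with c
  on S. Two lonely vertices coincide if one lies in the hyperedge of the other and the two
  hyperedges share three cells, for a third shared cell would need a third colour. So every row
  and every block has at most one lonely vertex. In a band of m rows, if all m blocks have a
  lonely vertex then every vertex lonely in its row is lonely in its block, and if all m rows have
  a lonely vertex that is not lonely in its block then no block has a lonely vertex. Hence per
  band, twice the number of row-lonely vertices that are not block-lonely plus the number of
  block-lonely vertices is at most 3m - 3. Summing over the bands and adding the same bound for
  the transposed colouring shows that at most 3m^2 - 3m vertices are lonely somewhere, so
  |S| \<ge> m^4 - 3m^2 + 3m.
  Upper bound: colour with 1 the last row and the last column, without their common corner, of
  every diagonal block and the corner of every off-diagonal block, and all other cells with 2.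
  Every hyperedge meets both colours, no cell of colour 2 is lonely, and every cell of colour 1
  is the only one of its colour in some row, column or block. Hence the at most
  m^4 - 3m^2 + 3m cells of colour 2 form the unique critical set.\<close>

section \<open>Lonely vertices and critical sets\<close>

definition lonely :: "('a \<Rightarrow> nat) \<Rightarrow> 'a set \<Rightarrow> 'a \<Rightarrow> bool" where
  "lonely c e v \<longleftrightarrow> v \<in> e \<and> (\<forall>w\<in>e. w \<noteq> v \<longrightarrow> c w \<noteq> c v)"

lemma lonely_image:
  assumes "inj f"
  shows "lonely c (f ` e) (f v) \<longleftrightarrow> lonely (c \<circ> f) e v"
  using assms unfolding lonely_def inj_def by auto

lemma lonely_overlap_eq:
  assumes u: "lonely c e u" and z: "lonely c f z" "z \<in> e"
    and overlap: "3 \<le> card (e \<inter> f)" and two: "c ` e \<subseteq> {1..2}"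
  shows "u = z"
proof (rule ccontr)
  assume "u \<noteq> z"
  have "card {u, z} \<le> 2" by (simp add: card_insert_if)
  then have "\<not> e \<inter> f \<subseteq> {u, z}" using overlap card_mono[of "{u, z}" "e \<inter> f"] by auto
  then obtain w where w: "w \<in> e" "w \<in> f" "w \<noteq> u" "w \<noteq> z" by blast
  have "c w \<noteq> c u" "c z \<noteq> c u" "c w \<noteq> c z"
    using u z w \<open>u \<noteq> z\<close> unfolding lonely_def by auto
  moreover have "c x = 1 \<or> c x = 2" if "x \<in> e" for x using two that by fastforce
  ultimately show False using u w \<open>z \<in> e\<close> unfolding lonely_def by metis
qed

lemma chi_eq_2I:
  assumes col: "is_colouring H 2 c" and e: "e \<in> snd H" "e \<noteq> {}" "e \<subseteq> fst H"
  shows "chi H = 2"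
proof -
  have "\<not> is_colouring H k c'" if "k < 2" for k c'
  proof
    assume c': "is_colouring H k c'"
    obtain v where "v \<in> e" using e(2) by blast
    then have "c' v \<in> {1..k}" using c' e(3) unfolding is_colouring_def by blast
    then have "k = 1" using that by simp
    then have "\<forall>w\<in>e. c' w = 1" using c' e(3) unfolding is_colouring_def by fastforce
    then show False using c' e(1) unfolding is_colouring_def by blast
  qed
  then show ?thesis
    unfolding chi_def using col by (intro Least_equality) (auto simp: not_less[symmetric])
qed

lemma lonely_if_not_in_determining_set:
  assumes chi: "chi H = 2" and c: "chi_colouring H c" and S: "determining_set H c S"
    and v: "v \<in> fst H" "v \<notin> S"
  shows "\<exists>e\<in>snd H. lonely c e v"
proof (rule ccontr)
  assume not_lonely: "\<not> (\<exists>e\<in>snd H. lonely c e v)"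
  define c' where "c' = c(v := 3 - c v)"
  have cv: "c v \<in> {1..2}" using c v chi unfolding chi_colouring_def is_colouring_def by auto
  have "\<not> (\<exists>i. \<forall>w\<in>e. c' w = i)" if e: "e \<in> snd H" for e
  proof
    assume "\<exists>i. \<forall>w\<in>e. c' w = i"
    then obtain i where i: "\<forall>w\<in>e. c' w = i" by blast
    show False
    proof (cases "v \<in> e")
      case True
      have "c w \<noteq> c v" if "w \<in> e" "w \<noteq> v" for w
        using i[rule_format, OF that(1)] i[rule_format, OF True] that(2) cv unfolding c'_def
          by (auto; arith)
      then have "lonely c e v" using True unfolding lonely_def by blast
      then show False using not_lonely e by blast
    next
      case False
      then have "\<forall>w\<in>e. c w = i" using i unfolding c'_def by auto
      then show False using c e unfolding chi_colouring_def is_colouring_def by blast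
    qed
  qed
  then have "chi_colouring H c'"
    using c cv chi unfolding chi_colouring_def is_colouring_def c'_def by auto
  moreover have "\<forall>w\<in>S. c' w = c w" using v unfolding c'_def by auto
  ultimately have "c' v = c v" using S v unfolding determining_set_def by blast
  then show False using cv unfolding c'_def by (auto; arith)
qed

lemma critical_set_iff_eq_least_determining_set:
  assumes S\<^sub>0: "determining_set H c S\<^sub>0" and least: "\<And>S. determining_set H c S \<Longrightarrow> S\<^sub>0 \<subseteq> S"
  shows "critical_set H c S \<longleftrightarrow> S = S\<^sub>0"
proof
  assume "critical_set H c S"
  then have "determining_set H c S" "\<not> S\<^sub>0 \<subset> S" using S\<^sub>0 unfolding critical_set_def by auto
  then show "S = S\<^sub>0" using least by blast
next
  assume "S = S\<^sub>0"
  then show "critical_set H c S" using S\<^sub>0 least unfolding critical_set_def by blast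
qed

lemma critical_set_exists:
  assumes "finite (fst H)"
  shows "\<exists>S. critical_set H c S"
proof -
  have "determining_set H c (fst H)" unfolding determining_set_def by auto
  then obtain S where S: "determining_set H c S"
    and min: "\<And>T. determining_set H c T \<Longrightarrow> card S \<le> card T"
    using ex_has_least_nat[of "determining_set H c" _ card] by blast
  have "finite S" using S assms unfolding determining_set_def by (auto intro: finite_subset)
  then have "\<not> determining_set H c T" if "T \<subset> S" for T
    using min[of T] psubset_card_mono[OF _ that] by linarith
  then show ?thesis using S unfolding critical_set_def by blast
qed

lemma critical_set_card_bounds:
  assumes fin: "finite (fst H)" and lower: "\<And>S. determining_set H c S \<Longrightarrow> n \<le> card S"
  shows "n \<le> scs H c \<and> scs H c \<le> card (fst H)" "n \<le> lcs H c \<and> lcs H c \<le> card (fst H)"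
proof -
  let ?X = "{card S | S. critical_set H c S}"
  have bounds: "n \<le> x \<and> x \<le> card (fst H)" if "x \<in> ?X" for x
  proof -
    obtain S where S: "x = card S" "critical_set H c S" using \<open>x \<in> ?X\<close> by blast
    then have det: "determining_set H c S" unfolding critical_set_def by blast
    then have "S \<subseteq> fst H" unfolding determining_set_def by (rule conjunct1)
    then show ?thesis using S(1) lower[OF det] card_mono[OF fin] by simp
  qed
  have "?X \<subseteq> {..card (fst H)}" using bounds by (meson atMost_iff subsetI)
  then have "finite ?X" by (rule finite_subset) simp
  moreover have "?X \<noteq> {}" using critical_set_exists[OF fin] by blast
  ultimately have "Min ?X \<in> ?X" "Max ?X \<in> ?X" by (rule Min_in, rule Max_in)
  then show "n \<le> scs H c \<and> scs H c \<le> card (fst H)" "n \<le> lcs H c \<and> lcs H c \<le> card (fst H)"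
    unfolding scs_def lcs_def by (simp_all only: bounds)
qed

lemma Min_setcompr_eqI:
  fixes f :: "'a \<Rightarrow> nat"
  assumes bounds: "\<And>x. P x \<Longrightarrow> n \<le> f x \<and> f x \<le> N" and "P x\<^sub>0" "f x\<^sub>0 = n"
  shows "Min {f x | x. P x} = n"
proof (rule Min_eqI)
  have "{f x | x. P x} \<subseteq> {..N}" using bounds by auto
  then show "finite {f x | x. P x}" by (rule finite_subset) simp
  show "n \<le> y" if "y \<in> {f x | x. P x}" for y using that bounds by auto
  show "n \<in> {f x | x. P x}" using assms(2,3) by auto
qed

lemma sn_lcs_lower_eqI:
  assumes fin: "finite (fst H)"
    and lower: "\<And>c S. chi_colouring H c \<Longrightarrow> determining_set H c S \<Longrightarrow> n \<le> card S"
    and c\<^sub>0: "chi_colouring H c\<^sub>0" and S\<^sub>0: "determining_set H c\<^sub>0 S\<^sub>0" "card S\<^sub>0 \<le> n"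
    and least: "\<And>S. determining_set H c\<^sub>0 S \<Longrightarrow> S\<^sub>0 \<subseteq> S"
  shows "sn H = n \<and> lcs_lower H = n"
proof -
  have "{card S | S. critical_set H c\<^sub>0 S} = {card S\<^sub>0}"
    using critical_set_iff_eq_least_determining_set[OF S\<^sub>0(1) least] by auto
  moreover have "card S\<^sub>0 = n" using lower[OF c\<^sub>0 S\<^sub>0(1)] S\<^sub>0(2) by simp
  ultimately have c\<^sub>0_values: "scs H c\<^sub>0 = n" "lcs H c\<^sub>0 = n" unfolding scs_def lcs_def by simp_all
  have bounds: "n \<le> scs H c \<and> scs H c \<le> card (fst H)" "n \<le> lcs H c \<and> lcs H c \<le> card (fst H)"
    if "chi_colouring H c" for c
    using critical_set_card_bounds[OF fin lower[OF that]] by blast+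
  have "sn H = n" unfolding sn_def
    using Min_setcompr_eqI[where f = "scs H" and P = "chi_colouring H",
        OF bounds(1) c\<^sub>0 c\<^sub>0_values(1)] .
  moreover have "lcs_lower H = n" unfolding lcs_lower_def
    using Min_setcompr_eqI[where f = "lcs H" and P = "chi_colouring H",
        OF bounds(2) c\<^sub>0 c\<^sub>0_values(2)] .
  ultimately show ?thesis ..
qed

section \<open>The Sudoku hypergraph\<close>

lemma swap_image_eqI:
  assumes "\<And>v. v \<in> A \<longleftrightarrow> prod.swap v \<in> B"
  shows "A = prod.swap ` B"
proof
  show "A \<subseteq> prod.swap ` B"
    using assms by (metis image_eqI subsetI swap_swap)
  show "prod.swap ` B \<subseteq> A" using assms by auto
qed

definition band_of :: "nat \<Rightarrow> nat \<Rightarrow> nat" where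
  "band_of m x = (x + m - 1) div m"

definition band :: "nat \<Rightarrow> nat \<Rightarrow> nat set" where
  "band m i = {x \<in> {1..m^2}. band_of m x = i}"

definition grid :: "nat \<Rightarrow> (nat \<times> nat) set" where
  "grid m = {1..m^2} \<times> {1..m^2}"

lemma SUD_eq:
  "SUD m = (grid m,
     {{a} \<times> {1..m^2} | a. a \<in> {1..m^2}} \<union> {{1..m^2} \<times> {b} | b. b \<in> {1..m^2}} \<union>
     {band m i \<times> band m j | i j. i \<in> {1..m} \<and> j \<in> {1..m}})"
proof -
  have "{(a, b) | b. b \<in> {1..m^2}} = {a} \<times> {1..m^2}"
    and "{(a, b) | a. a \<in> {1..m^2}} = {1..m^2} \<times> {b}" for a b :: nat
    by auto
  moreover have "{(a, b) | a b. a \<in> {1..m^2} \<and> b \<in> {1..m^2} \<and>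
      (a + m - 1) div m = i \<and> (b + m - 1) div m = j} = band m i \<times> band m j" for i j
    unfolding band_def band_of_def by auto
  ultimately show ?thesis unfolding SUD_def grid_def by (simp only:)
qed

lemma fst_SUD: "fst (SUD m) = grid m"
  by (simp add: SUD_eq)

lemma SUD_edgeE:
  assumes "e \<in> snd (SUD m)"
  obtains (row) a where "a \<in> {1..m^2}" "e = {a} \<times> {1..m^2}"
    | (col) b where "b \<in> {1..m^2}" "e = {1..m^2} \<times> {b}"
    | (block) i j where "i \<in> {1..m}" "j \<in> {1..m}" "e = band m i \<times> band m j"
  using assms unfolding SUD_eq by auto

lemma row_in_SUD: "a \<in> {1..m^2} \<Longrightarrow> {a} \<times> {1..m^2} \<in> snd (SUD m)"
  unfolding SUD_eq snd_conv by blast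

lemma col_in_SUD: "b \<in> {1..m^2} \<Longrightarrow> {1..m^2} \<times> {b} \<in> snd (SUD m)"
  unfolding SUD_eq snd_conv by blast

lemma block_in_SUD: "i \<in> {1..m} \<Longrightarrow> j \<in> {1..m} \<Longrightarrow> band m i \<times> band m j \<in> snd (SUD m)"
  unfolding SUD_eq snd_conv by blast

lemma SUD_edge_subset_grid: "e \<in> snd (SUD m) \<Longrightarrow> e \<subseteq> grid m"
  by (erule SUD_edgeE) (auto simp: grid_def band_def)

lemma card_grid: "card (grid m) = m^4"
  by (simp add: grid_def card_cartesian_product power2_eq_square power4_eq_xxxx)

lemma div_eq_iff_nat:
  fixes m y i :: nat
  assumes "0 < m"
  shows "y div m = i \<longleftrightarrow> i * m \<le> y \<and> y < i * m + m"
proof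
  assume "y div m = i"
  then have "i * m + y mod m = y" using div_mult_mod_eq[of y m] by simp
  then show "i * m \<le> y \<and> y < i * m + m" using mod_less_divisor[OF assms, of y] by linarith
next
  assume "i * m \<le> y \<and> y < i * m + m"
  then show "y div m = i" by (intro div_nat_eqI) (auto simp: mult.commute)
qed

lemma band_eq:
  assumes "i \<in> {1..m}"
  shows "band m i = {(i - 1) * m <.. (i - 1) * m + m}"
proof -
  obtain k where k: "i = Suc k" "k < m" using assms by (cases i) auto
  then have "k * m + m \<le> m^2" using mult_le_mono1[of "Suc k" m m] by (simp add: power2_eq_square)
  moreover have "0 < m" using k by simp
  ultimately show ?thesis
    unfolding band_def band_of_def div_eq_iff_nat[OF \<open>0 < m\<close>] k(1) by auto
qed

lemma card_band: "i \<in> {1..m} \<Longrightarrow> card (band m i) = m"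
  by (simp add: band_eq)

lemma band_of_in_range:
  assumes "x \<in> {1..m^2}"
  shows "band_of m x \<in> {1..m}"
proof -
  have "0 < m" using assms by (cases m) auto
  have "band_of m x * m \<le> x + m - 1" "x + m - 1 < band_of m x * m + m"
    using div_eq_iff_nat[OF \<open>0 < m\<close>] unfolding band_of_def by blast+
  moreover have "x + m - 1 < (m + 1) * m" using assms by (simp add: power2_eq_square) arith
  ultimately have "band_of m x * m < (m + 1) * m" by linarith
  moreover have "m < band_of m x * m + m" using \<open>x + m - 1 < band_of m x * m + m\<close> assms
    by (simp only: atLeastAtMost_iff) arith
  ultimately show ?thesis unfolding mult_less_cancel2 by auto
qed

lemma multiple_in_band: "i \<in> {1..m} \<Longrightarrow> i * m \<in> band m i"
  by (cases i) (auto simp: band_eq)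

lemma band_dvd_eq:
  assumes "i \<in> {1..m}" "x \<in> band m i" "m dvd x"
  shows "x = i * m"
proof -
  obtain k where x: "x = k * m" using assms(3) by (metis dvdE mult.commute)
  obtain j where j: "i = Suc j" using assms(1) by (cases i) auto
  have "j * m < k * m" "k * m \<le> j * m + m" using assms(1,2) x j by (auto simp: band_eq)
  then have "j * m < k * m" "k * m \<le> Suc j * m" by simp_all
  then have "j < k" "k \<le> Suc j" unfolding mult_less_cancel2 mult_le_cancel2 by simp_all
  then show ?thesis using x j by (simp add: le_Suc_eq)
qed

lemma band_first_cells:
  assumes "3 \<le> m" "i \<in> {1..m}"
  shows "(i - 1) * m + 1 \<in> band m i" "(i - 1) * m + 2 \<in> band m i"
    "\<not> m dvd (i - 1) * m + 1" "\<not> m dvd (i - 1) * m + 2"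
proof -
  show "(i - 1) * m + 1 \<in> band m i" "(i - 1) * m + 2 \<in> band m i"
    using assms by (auto simp: band_eq)
  have "\<not> m dvd k" if "k \<in> {1, 2}" for k using assms that by (auto dest: dvd_imp_le)
  then show "\<not> m dvd (i - 1) * m + 1" "\<not> m dvd (i - 1) * m + 2"
    by (simp_all only: dvd_add_right_iff dvd_triv_right) auto
qed

section \<open>Lonely vertices of a 2-colouring of the Sudoku hypergraph\<close>

definition block_of :: "nat \<Rightarrow> nat \<times> nat \<Rightarrow> (nat \<times> nat) set" where
  "block_of m v = band m (band_of m (fst v)) \<times> band m (band_of m (snd v))"

definition row_lonely :: "nat \<Rightarrow> (nat \<times> nat \<Rightarrow> nat) \<Rightarrow> (nat \<times> nat) set" where
  "row_lonely m c = {v \<in> grid m. lonely c ({fst v} \<times> {1..m^2}) v}"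

definition col_lonely :: "nat \<Rightarrow> (nat \<times> nat \<Rightarrow> nat) \<Rightarrow> (nat \<times> nat) set" where
  "col_lonely m c = {v \<in> grid m. lonely c ({1..m^2} \<times> {snd v}) v}"

definition block_lonely :: "nat \<Rightarrow> (nat \<times> nat \<Rightarrow> nat) \<Rightarrow> (nat \<times> nat) set" where
  "block_lonely m c = {v \<in> grid m. lonely c (block_of m v) v}"

lemma block_of_subset_grid: "block_of m v \<subseteq> grid m"
  unfolding block_of_def band_def grid_def by auto

lemma block_of_eqI:
  "band_of m (fst u) = band_of m (fst v) \<Longrightarrow> band_of m (snd u) = band_of m (snd v) \<Longrightarrow>
    block_of m u = block_of m v"
  unfolding block_of_def by simp

lemma mem_block_of: "v \<in> grid m \<Longrightarrow> v \<in> block_of m v"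
  unfolding block_of_def band_def grid_def by (auto simp: mem_Times_iff)

lemma card_row_inter_block:
  assumes "z \<in> grid m"
  shows "card (({fst z} \<times> {1..m^2}) \<inter> block_of m z) = m"
proof -
  have "({fst z} \<times> {1..m^2}) \<inter> block_of m z = {fst z} \<times> band m (band_of m (snd z))"
    using assms unfolding block_of_def band_def grid_def by auto
  moreover have "band_of m (snd z) \<in> {1..m}" using assms band_of_in_range unfolding grid_def by auto
  ultimately show ?thesis by (simp add: card_cartesian_product_singleton card_band)
qed

lemma card_eq_sum_band_fibres:
  assumes "A \<subseteq> grid m"
  shows "card A = (\<Sum>i\<in>{1..m}. card {v \<in> A. band_of m (fst v) = i})"
proof -
  have "finite A" using assms finite_subset unfolding grid_def by blast
  moreover have "(\<lambda>v. band_of m (fst v)) ` A \<subseteq> {1..m}"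
    using assms band_of_in_range unfolding grid_def by auto
  ultimately show ?thesis
    using sum.group[of A "{1..m}" "\<lambda>v. band_of m (fst v)" "\<lambda>_. 1 :: nat"] by simp
qed

lemma col_lonely_swap: "col_lonely m c = prod.swap ` row_lonely m (c \<circ> prod.swap)"
proof (rule swap_image_eqI)
  fix v :: "nat \<times> nat"
  have "{1..m^2} \<times> {snd v} = prod.swap ` ({fst (prod.swap v)} \<times> {1..m^2})"
    by (simp add: product_swap)
  then have "lonely c ({1..m^2} \<times> {snd v}) v
      \<longleftrightarrow> lonely (c \<circ> prod.swap) ({fst (prod.swap v)} \<times> {1..m^2}) (prod.swap v)"
    using lonely_image[of prod.swap c] by (metis inj_swap swap_swap)
  then show "v \<in> col_lonely m c \<longleftrightarrow> prod.swap v \<in> row_lonely m (c \<circ> prod.swap)"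
    unfolding col_lonely_def row_lonely_def grid_def by (auto simp: mem_Times_iff)
qed

lemma block_lonely_swap: "block_lonely m c = prod.swap ` block_lonely m (c \<circ> prod.swap)"
proof (rule swap_image_eqI)
  fix v :: "nat \<times> nat"
  have "block_of m v = prod.swap ` block_of m (prod.swap v)"
    unfolding block_of_def by (simp add: product_swap)
  then have "lonely c (block_of m v) v
      \<longleftrightarrow> lonely (c \<circ> prod.swap) (block_of m (prod.swap v)) (prod.swap v)"
    using lonely_image[of prod.swap c] by (metis inj_swap swap_swap)
  then show "v \<in> block_lonely m c \<longleftrightarrow> prod.swap v \<in> block_lonely m (c \<circ> prod.swap)"
    unfolding block_lonely_def grid_def by (auto simp: mem_Times_iff)
qed

lemma lonely_in_SUD_edge:
  assumes e: "e \<in> snd (SUD m)" and v: "lonely c e v"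
  shows "v \<in> row_lonely m c \<union> col_lonely m c \<union> block_lonely m c"
proof -
  have "v \<in> e" using v unfolding lonely_def by blast
  from e show ?thesis
  proof (cases rule: SUD_edgeE)
    case (row a)
    then have "e = {fst v} \<times> {1..m^2}" "v \<in> grid m" using \<open>v \<in> e\<close> unfolding grid_def by auto
    then have "v \<in> row_lonely m c" using v unfolding row_lonely_def by simp
    then show ?thesis by blast
  next
    case (col b)
    then have "e = {1..m^2} \<times> {snd v}" "v \<in> grid m" using \<open>v \<in> e\<close> unfolding grid_def by auto
    then have "v \<in> col_lonely m c" using v unfolding col_lonely_def by simp
    then show ?thesis by blast
  next
    case (block i j)
    then have "e = block_of m v" "v \<in> grid m"
      using \<open>v \<in> e\<close> unfolding block_of_def band_def grid_def by (auto simp: mem_Times_iff)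
    then have "v \<in> block_lonely m c" using v unfolding block_lonely_def by simp
    then show ?thesis by blast
  qed
qed

context
  fixes m :: nat
  assumes m: "3 \<le> m"
begin

lemma three_le_square: "3 \<le> m^2"
  using m by (simp add: power2_eq_square) (metis le_trans le_square)

lemma row_lonely_unique:
  assumes two: "c ` grid m \<subseteq> {1..2}" and "u \<in> row_lonely m c" "u' \<in> row_lonely m c" "fst u = fst u'"
  shows "u = u'"
proof (rule lonely_overlap_eq)
  let ?row = "{fst u} \<times> {1..m^2}"
  show "lonely c ?row u" "lonely c ?row u'" using assms(2-4) unfolding row_lonely_def by auto
  then show "u' \<in> ?row" unfolding lonely_def by blast
  show "3 \<le> card (?row \<inter> ?row)" using three_le_square by simp
  show "c ` ?row \<subseteq> {1..2}" using two assms(2) unfolding row_lonely_def grid_def by auto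
qed

lemma block_lonely_unique:
  assumes two: "c ` grid m \<subseteq> {1..2}" and "u \<in> block_lonely m c" "u' \<in> block_lonely m c"
    "band_of m (fst u) = band_of m (fst u')" "band_of m (snd u) = band_of m (snd u')"
  shows "u = u'"
proof (rule lonely_overlap_eq)
  let ?block = "block_of m u"
  have "block_of m u' = ?block" using assms(4,5) by (rule block_of_eqI[symmetric])
  then show "lonely c ?block u" "lonely c ?block u'" using assms(2,3) unfolding block_lonely_def
    by auto
  then show "u' \<in> ?block" unfolding lonely_def by blast
  have "u \<in> grid m" using assms(2) unfolding block_lonely_def by blast
  then have "band_of m (fst u) \<in> {1..m}" "band_of m (snd u) \<in> {1..m}" using band_of_in_range
    unfolding grid_def by auto
  then have "card ?block = m * m" unfolding block_of_def
    by (simp add: card_cartesian_product card_band)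
  then show "3 \<le> card (?block \<inter> ?block)" using m by (simp add: le_trans[OF _ le_square])
  show "c ` ?block \<subseteq> {1..2}" using two block_of_subset_grid by blast
qed

lemma row_block_lonely_same_row:
  assumes two: "c ` grid m \<subseteq> {1..2}" and u: "u \<in> row_lonely m c" and z: "z \<in> block_lonely m c"
    and "fst z = fst u"
  shows "u = z"
proof (rule lonely_overlap_eq)
  let ?row = "{fst u} \<times> {1..m^2}"
  show "lonely c ?row u" "lonely c (block_of m z) z" using u z
    unfolding row_lonely_def block_lonely_def by auto
  show "z \<in> ?row" using z \<open>fst z = fst u\<close> unfolding block_lonely_def grid_def by auto
  show "3 \<le> card (?row \<inter> block_of m z)"
    using card_row_inter_block[of z] z m \<open>fst z = fst u\<close> unfolding block_lonely_def by simp
  show "c ` ?row \<subseteq> {1..2}" using two u unfolding row_lonely_def grid_def by auto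
qed

lemma row_block_lonely_same_block:
  assumes two: "c ` grid m \<subseteq> {1..2}" and u: "u \<in> row_lonely m c" and z: "z \<in> block_lonely m c"
    and "band_of m (fst z) = band_of m (fst u)" "band_of m (snd z) = band_of m (snd u)"
  shows "u = z"
proof (rule lonely_overlap_eq[symmetric])
  have "block_of m u = block_of m z" using assms(4,5) by (rule block_of_eqI[symmetric])
  moreover have "u \<in> grid m" using u unfolding row_lonely_def by blast
  ultimately have "u \<in> block_of m z" using mem_block_of by blast
  have "({fst u} \<times> {1..m^2}) \<inter> block_of m u = block_of m z \<inter> ({fst u} \<times> {1..m^2})"
    using \<open>block_of m u = block_of m z\<close> by blast
  then show "3 \<le> card (block_of m z \<inter> ({fst u} \<times> {1..m^2}))"
    using card_row_inter_block[OF \<open>u \<in> grid m\<close>] m by simp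
  show "lonely c (block_of m z) z" "lonely c ({fst u} \<times> {1..m^2}) u"
    using u z unfolding row_lonely_def block_lonely_def by auto
  show "u \<in> block_of m z" by fact
  show "c ` block_of m z \<subseteq> {1..2}" using two block_of_subset_grid by blast
qed

lemma row_lonely_block_lonely_if_all_blocks:
  assumes two: "c ` grid m \<subseteq> {1..2}"
    and all_blocks: "\<forall>j\<in>{1..m}. \<exists>z\<in>block_lonely m c. band_of m (fst z) = i \<and> band_of m (snd z) = j"
    and u: "u \<in> row_lonely m c" "band_of m (fst u) = i"
  shows "u \<in> block_lonely m c"
proof -
  have "band_of m (snd u) \<in> {1..m}" using u band_of_in_range unfolding row_lonely_def grid_def
    by auto
  then obtain z where
    "z \<in> block_lonely m c" "band_of m (fst z) = i" "band_of m (snd z) = band_of m (snd u)"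
    using all_blocks by blast
  moreover from this have "u = z" using row_block_lonely_same_block[OF two u(1)] u(2) by simp
  ultimately show ?thesis by simp
qed

lemma no_block_lonely_if_all_rows:
  assumes two: "c ` grid m \<subseteq> {1..2}"
    and all_rows: "\<forall>a\<in>band m i. \<exists>u\<in>row_lonely m c - block_lonely m c. fst u = a"
    and z: "z \<in> block_lonely m c" "band_of m (fst z) = i"
  shows False
proof -
  have "fst z \<in> band m i" using z unfolding block_lonely_def grid_def band_def by auto
  then obtain u where "u \<in> row_lonely m c - block_lonely m c" "fst u = fst z" using all_rows
    by blast
  moreover from this have "u = z" using row_block_lonely_same_row[OF two _ z(1)] by simp
  ultimately show False using z(1) by simp
qed

lemma band_lonely_bound:
  assumes two: "c ` grid m \<subseteq> {1..2}" and i: "i \<in> {1..m}"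
  shows "2 * card {v \<in> row_lonely m c - block_lonely m c. band_of m (fst v) = i}
    + card {v \<in> block_lonely m c. band_of m (fst v) = i} \<le> 3 * m - 3"
proof -
  define R where "R = {v \<in> row_lonely m c - block_lonely m c. band_of m (fst v) = i}"
  define B where "B = {v \<in> block_lonely m c. band_of m (fst v) = i}"
  have R_band: "fst ` R \<subseteq> band m i" and B_blocks: "(\<lambda>v. band_of m (snd v)) ` B \<subseteq> {1..m}"
    unfolding R_def B_def row_lonely_def block_lonely_def band_def grid_def
    using band_of_in_range by auto
  have inj_R: "inj_on fst R"
  proof (rule inj_onI)
    fix u u' assume "u \<in> R" "u' \<in> R" "fst u = fst u'"
    then show "u = u'" using row_lonely_unique[OF two, of u u'] unfolding R_def by simp
  qed
  have inj_B: "inj_on (\<lambda>v. band_of m (snd v)) B"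
  proof (rule inj_onI)
    fix u u' assume "u \<in> B" "u' \<in> B" "band_of m (snd u) = band_of m (snd u')"
    then show "u = u'" using block_lonely_unique[OF two, of u u'] unfolding B_def by simp
  qed
  have "finite (band m i)" by (simp add: band_def)
  then have card_R: "card R \<le> m"
    using card_inj_on_le[OF inj_R R_band] card_band[OF i] by simp
  have card_B: "card B \<le> m"
    using card_inj_on_le[OF inj_B B_blocks] by simp
  have R_empty: "R = {}" if "card B = m"
  proof -
    have all_blocks: "(\<lambda>v. band_of m (snd v)) ` B = {1..m}"
      using that card_image[OF inj_B] by (intro card_subset_eq B_blocks) auto
    have "\<exists>z\<in>block_lonely m c. band_of m (fst z) = i \<and> band_of m (snd z) = j" if "j \<in> {1..m}" for j
    proof -
      from that obtain z where "j = band_of m (snd z)" "z \<in> B"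
        unfolding all_blocks[symmetric] by (rule imageE)
      then show ?thesis unfolding B_def by auto
    qed
    then show "R = {}" using row_lonely_block_lonely_if_all_blocks[OF two] unfolding R_def by blast
  qed
  have B_empty: "B = {}" if "card R = m"
  proof -
    have all_rows: "fst ` R = band m i"
      using that card_image[OF inj_R] card_band[OF i] \<open>finite (band m i)\<close>
      by (intro card_subset_eq R_band) auto
    have "\<exists>u\<in>row_lonely m c - block_lonely m c. fst u = a" if "a \<in> band m i" for a
    proof -
      from that obtain u where "a = fst u" "u \<in> R" unfolding all_rows[symmetric] by (rule imageE)
      then show ?thesis unfolding R_def by auto
    qed
    then show "B = {}" using no_block_lonely_if_all_rows[OF two] unfolding B_def by blast
  qed
  consider "card B = m" | "card R = m" | "card R < m" "card B < m"
    using card_R card_B by linarith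
  then have "2 * card R + card B \<le> 3 * m - 3"
  proof cases
    case 1
    then show ?thesis using R_empty m by simp
  next
    case 2
    then show ?thesis using B_empty m by simp
  next
    case 3
    then show ?thesis by linarith
  qed
  then show ?thesis unfolding R_def B_def .
qed

(* The weights are chosen so that adding this bound for c and for its transpose bounds twice
   the number of lonely vertices. *)
lemma row_block_lonely_bound:
  assumes two: "c ` grid m \<subseteq> {1..2}"
  shows "2 * card (row_lonely m c - block_lonely m c) + card (block_lonely m c) \<le> m * (3 * m - 3)"
proof -
  let ?R = "\<lambda>i. {v \<in> row_lonely m c - block_lonely m c. band_of m (fst v) = i}"
  let ?B = "\<lambda>i. {v \<in> block_lonely m c. band_of m (fst v) = i}"
  have "row_lonely m c - block_lonely m c \<subseteq> grid m" "block_lonely m c \<subseteq> grid m"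
    unfolding row_lonely_def block_lonely_def by auto
  then have "2 * card (row_lonely m c - block_lonely m c) + card (block_lonely m c)
      = (\<Sum>i\<in>{1..m}. 2 * card (?R i) + card (?B i))"
    by (simp add: card_eq_sum_band_fibres sum.distrib sum_distrib_left)
  also have "\<dots> \<le> (\<Sum>i\<in>{1..m}. 3 * m - 3)"
    by (rule sum_mono) (rule band_lonely_bound[OF two])
  finally show ?thesis by simp
qed

lemma lonely_cells_bound:
  assumes two: "c ` grid m \<subseteq> {1..2}"
  shows "card (row_lonely m c \<union> col_lonely m c \<union> block_lonely m c) \<le> 3 * m^2 - 3 * m"
proof -
  let ?R = "row_lonely m c" and ?C = "col_lonely m c" and ?B = "block_lonely m c"
  let ?R' = "row_lonely m (c \<circ> prod.swap)" and ?B' = "block_lonely m (c \<circ> prod.swap)"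
  have "prod.swap ` grid m = grid m" unfolding grid_def by (rule product_swap)
  then have two': "(c \<circ> prod.swap) ` grid m \<subseteq> {1..2}" using two by (metis image_comp)
  have "?C - ?B = prod.swap ` (?R' - ?B')"
    using col_lonely_swap[of m c] block_lonely_swap[of m c] image_set_diff[OF inj_swap] by metis
  then have card_C: "card (?C - ?B) = card (?R' - ?B')" using card_image[OF inj_swap] by metis
  have card_B: "card ?B = card ?B'" using block_lonely_swap[of m c] card_image[OF inj_swap] by metis
  have "card (?R \<union> ?C \<union> ?B) = card ((?R - ?B) \<union> (?C - ?B) \<union> ?B)"
    by (rule arg_cong[where f = card]) blast
  also have "\<dots> \<le> card (?R - ?B) + card (?C - ?B) + card ?B"
    using card_Un_le[of "(?R - ?B) \<union> (?C - ?B)" ?B] card_Un_le[of "?R - ?B" "?C - ?B"] by linarith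
  also have "\<dots> \<le> m * (3 * m - 3)"
    using row_block_lonely_bound[OF two] row_block_lonely_bound[OF two'] card_C card_B by linarith
  also have "\<dots> = 3 * m^2 - 3 * m" by (simp add: power2_eq_square diff_mult_distrib2)
  finally show ?thesis .
qed

end

section \<open>The extremal colouring\<close>

lemma card_non_multiples:
  assumes "0 < m"
  shows "card {a \<in> {1..k * m}. \<not> m dvd a} = k * m - k"
proof -
  have multiples: "{a \<in> {1..k * m}. m dvd a} = (\<lambda>i. i * m) ` {1..k}"
  proof (intro equalityI subsetI)
    fix a assume "a \<in> {a \<in> {1..k * m}. m dvd a}"
    then obtain i where "a = i * m" "1 \<le> i * m" "i * m \<le> k * m" by (auto simp: mult.commute)
    then show "a \<in> (\<lambda>i. i * m) ` {1..k}" using assms by (auto intro: Suc_leI)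
  qed (use assms in auto)
  have "inj_on (\<lambda>i. i * m) {1..k}" using assms by (auto intro: inj_onI)
  then have "card {a \<in> {1..k * m}. m dvd a} = k" unfolding multiples by (simp add: card_image)
  moreover have "{a \<in> {1..k * m}. \<not> m dvd a} = {1..k * m} - {a \<in> {1..k * m}. m dvd a}" by auto
  moreover have
    "card ({1..k * m} - {a \<in> {1..k * m}. m dvd a}) = k * m - card {a \<in> {1..k * m}. m dvd a}"
    by (subst card_Diff_subset) auto
  ultimately show ?thesis by simp
qed

lemma card_off_diagonal:
  assumes "finite A"
  shows "card {p \<in> A \<times> A. fst p \<noteq> snd p} = card A * card A - card A"
proof -
  have "{p \<in> A \<times> A. fst p \<noteq> snd p} = A \<times> A - (\<lambda>x. (x, x)) ` A" by auto
  moreover have "card ((\<lambda>x. (x, x)) ` A) = card A" by (auto intro: card_image inj_onI)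
  ultimately show ?thesis using assms
    by (simp add: card_Diff_subset card_cartesian_product image_subset_iff)
qed

(* m dvd x means that x is the last index of its band *)
definition ones :: "nat \<Rightarrow> (nat \<times> nat) set" where
  "ones m = {v \<in> grid m.
     if band_of m (fst v) = band_of m (snd v) then (m dvd fst v \<longleftrightarrow> \<not> m dvd snd v)
     else m dvd fst v \<and> m dvd snd v}"

definition ones_colouring :: "nat \<Rightarrow> nat \<times> nat \<Rightarrow> nat" where
  "ones_colouring m v = (if v \<in> ones m then 1 else 2)"

lemma swap_mem_ones_iff: "prod.swap v \<in> ones m \<longleftrightarrow> v \<in> ones m"
  unfolding ones_def grid_def by (cases v) auto

lemma swap_ones: "prod.swap ` ones m = ones m"
  using swap_image_eqI[of "ones m" "ones m"] swap_mem_ones_iff by metis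

lemma mem_ones_iff:
  assumes "x \<in> band m i" "y \<in> band m j"
  shows "(x, y) \<in> ones m \<longleftrightarrow> (if i = j then (m dvd x \<longleftrightarrow> \<not> m dvd y) else m dvd x \<and> m dvd y)"
  using assms unfolding ones_def band_def grid_def by auto

context
  fixes m :: nat
  assumes m: "3 \<le> m"
begin

lemma square_bounds: "3 * m \<le> 3 * m^2" "3 * m^2 \<le> m^4"
proof -
  show "3 * m \<le> 3 * m^2" using le_square[of m] by (simp add: power2_eq_square)
  have "m^4 = m^2 * m^2" by algebra
  then show "3 * m^2 \<le> m^4" using mult_le_mono1[OF three_le_square[OF m], of "m^2"] by simp
qed

lemma row_meets_ones:
  assumes "a \<in> {1..m^2}"
  shows "({a} \<times> {1..m^2}) \<inter> ones m \<noteq> {}"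
proof -
  define i where "i = band_of m a"
  have i: "i \<in> {1..m}" "a \<in> band m i" using band_of_in_range[OF assms] assms
    unfolding i_def band_def by auto
  define b where "b = (if m dvd a then (i - 1) * m + 1 else i * m)"
  have b: "b \<in> band m i" "m dvd a \<longleftrightarrow> \<not> m dvd b"
    using band_first_cells[OF m i(1)] multiple_in_band[OF i(1)] unfolding b_def by auto
  then have "(a, b) \<in> ones m" using mem_ones_iff[OF i(2) b(1)] by simp
  moreover have "b \<in> {1..m^2}" using b(1) unfolding band_def by simp
  ultimately show ?thesis by blast
qed

lemma block_meets_ones:
  assumes i: "i \<in> {1..m}" and j: "j \<in> {1..m}"
  shows "(band m i \<times> band m j) \<inter> ones m \<noteq> {}"
proof (cases "i = j")
  case True
  then have "((i - 1) * m + 1, j * m) \<in> (band m i \<times> band m j) \<inter> ones m"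
    using band_first_cells[OF m i] multiple_in_band[OF j] mem_ones_iff by auto
  then show ?thesis by blast
next
  case False
  then have "(i * m, j * m) \<in> (band m i \<times> band m j) \<inter> ones m"
    using multiple_in_band[OF i] multiple_in_band[OF j] mem_ones_iff by auto
  then show ?thesis by blast
qed

lemma row_two_outside_ones:
  assumes "a \<in> {1..m^2}"
  shows "\<exists>y\<in>{a} \<times> {1..m^2} - ones m. \<exists>y'\<in>{a} \<times> {1..m^2} - ones m. y \<noteq> y'"
proof -
  define i where "i = band_of m a"
  have i: "a \<in> band m i" using assms unfolding i_def band_def by auto
  define j where "j = (if i = 1 then 2 else 1 :: nat)"
  have j: "j \<in> {1..m}" "j \<noteq> i" using m unfolding j_def by auto
  have "{(a, (j - 1) * m + 1), (a, (j - 1) * m + 2)} \<subseteq> {a} \<times> {1..m^2} - ones m"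
    using band_first_cells[OF m j(1)] mem_ones_iff[OF i] j(2) unfolding band_def by auto
  moreover have "(a, (j - 1) * m + 1) \<noteq> (a, (j - 1) * m + 2)" by simp
  ultimately show ?thesis by blast
qed

lemma block_two_outside_ones:
  assumes i: "i \<in> {1..m}" and j: "j \<in> {1..m}"
  shows "\<exists>y\<in>band m i \<times> band m j - ones m. \<exists>y'\<in>band m i \<times> band m j - ones m. y \<noteq> y'"
proof -
  have "{((i - 1) * m + 1, (j - 1) * m + 1), ((i - 1) * m + 2, (j - 1) * m + 1)}
      \<subseteq> band m i \<times> band m j - ones m"
    using band_first_cells[OF m i] band_first_cells[OF m j] mem_ones_iff by auto
  moreover have "((i - 1) * m + 1, (j - 1) * m + 1) \<noteq> ((i - 1) * m + 2, (j - 1) * m + 1)" by simp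
  ultimately show ?thesis by blast
qed

lemma SUD_edge_meets_ones:
  assumes "e \<in> snd (SUD m)"
  shows "e \<inter> ones m \<noteq> {}"
  using assms
proof (cases rule: SUD_edgeE)
  case (row a)
  then show ?thesis using row_meets_ones by simp
next
  case (col b)
  then have "prod.swap ` (({b} \<times> {1..m^2}) \<inter> ones m) \<noteq> {}" using row_meets_ones by blast
  then show ?thesis using col(2) by (simp add: image_Int product_swap swap_ones)
next
  case (block i j)
  then show ?thesis using block_meets_ones by simp
qed

lemma SUD_edge_two_outside_ones:
  assumes "e \<in> snd (SUD m)"
  shows "\<exists>y\<in>e - ones m. \<exists>y'\<in>e - ones m. y \<noteq> y'"
  using assms
proof (cases rule: SUD_edgeE)
  case (row a)
  then show ?thesis using row_two_outside_ones by simp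
next
  case (col b)
  obtain y y' where "y \<in> {b} \<times> {1..m^2} - ones m" "y' \<in> {b} \<times> {1..m^2} - ones m" "y \<noteq> y'"
    using row_two_outside_ones[OF col(1)] by blast
  moreover have "prod.swap ` ({b} \<times> {1..m^2} - ones m) = e - ones m"
    using col(2) by (simp add: image_set_diff product_swap swap_ones)
  ultimately have
    "prod.swap y \<in> e - ones m" "prod.swap y' \<in> e - ones m" "prod.swap y \<noteq> prod.swap y'"
    by auto
  then show ?thesis by blast
next
  case (block i j)
  then show ?thesis using block_two_outside_ones by simp
qed

lemma is_colouring_ones: "is_colouring (SUD m) 2 (ones_colouring m)"
  unfolding is_colouring_def
proof (intro conjI ballI notI)
  fix e assume e: "e \<in> snd (SUD m)" and "\<exists>i. \<forall>v\<in>e. ones_colouring m v = i"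
  then obtain i where i: "\<forall>v\<in>e. ones_colouring m v = i" by blast
  obtain x where x: "x \<in> e" "x \<in> ones m" using SUD_edge_meets_ones[OF e] by blast
  obtain y where y: "y \<in> e" "y \<notin> ones m" using SUD_edge_two_outside_ones[OF e] by blast
  have "ones_colouring m x = i" "ones_colouring m y = i" using i x(1) y(1) by simp_all
  then show False using x(2) y(2) unfolding ones_colouring_def by simp
qed (simp add: ones_colouring_def)

lemma chi_SUD: "chi (SUD m) = 2"
proof (rule chi_eq_2I[OF is_colouring_ones])
  have "1 \<in> {1..m^2}" using three_le_square[OF m] by simp
  then show "{1} \<times> {1..m^2} \<in> snd (SUD m)" by (rule row_in_SUD)
  show "{1} \<times> {1..m^2} \<subseteq> fst (SUD m)" using \<open>1 \<in> {1..m^2}\<close> unfolding SUD_eq grid_def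
    by (simp add: Sigma_mono)
  show "{1} \<times> {1..m^2} \<noteq> {}" using three_le_square[OF m] by simp
qed

lemma chi_colouring_SUD_iff: "chi_colouring (SUD m) c \<longleftrightarrow> is_colouring (SUD m) 2 c"
  unfolding chi_colouring_def chi_SUD ..

lemma determining_set_card_ge:
  assumes c: "chi_colouring (SUD m) c" and S: "determining_set (SUD m) c S"
  shows "m^4 - 3 * m^2 + 3 * m \<le> card S"
proof -
  have "is_colouring (SUD m) 2 c" using c chi_colouring_SUD_iff by blast
  then have two: "c ` grid m \<subseteq> {1..2}" unfolding is_colouring_def fst_SUD by blast
  have "grid m - S \<subseteq> row_lonely m c \<union> col_lonely m c \<union> block_lonely m c"
  proof
    fix v assume "v \<in> grid m - S"
    then have "v \<in> fst (SUD m)" "v \<notin> S" unfolding SUD_eq by auto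
    then obtain e where "e \<in> snd (SUD m)" "lonely c e v"
      using lonely_if_not_in_determining_set[OF chi_SUD c S] by blast
    then show "v \<in> row_lonely m c \<union> col_lonely m c \<union> block_lonely m c" by (rule lonely_in_SUD_edge)
  qed
  moreover have "finite (row_lonely m c \<union> col_lonely m c \<union> block_lonely m c)"
    unfolding row_lonely_def col_lonely_def block_lonely_def grid_def by auto
  ultimately have "card (grid m - S) \<le> card (row_lonely m c \<union> col_lonely m c \<union> block_lonely m c)"
    by (rule card_mono[rotated])
  also have "\<dots> \<le> 3 * m^2 - 3 * m" by (rule lonely_cells_bound[OF m two])
  finally have "card (grid m - S) \<le> 3 * m^2 - 3 * m" .
  moreover have "S \<subseteq> grid m" using S unfolding determining_set_def SUD_eq by simp
  then have "card (grid m - S) = m^4 - card S"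
    by (simp add: card_Diff_subset finite_subset card_grid grid_def)
  ultimately show ?thesis using square_bounds by linarith
qed

lemma ones_unique_in_row:
  assumes v: "(a, b) \<in> ones m" "band_of m a = band_of m b" "\<not> m dvd a"
  shows "({a} \<times> {1..m^2}) \<inter> ones m = {(a, b)}"
proof -
  define i where "i = band_of m a"
  have a: "a \<in> band m i" and b: "b \<in> band m i" and "b \<in> {1..m^2}"
    using v unfolding ones_def grid_def band_def i_def by auto
  then have i: "i \<in> {1..m}" using band_of_in_range unfolding i_def band_def by blast
  have "m dvd b" using v mem_ones_iff[OF a b] by simp
  have "b' = b" if "(a, b') \<in> ones m" for b'
  proof -
    define j where "j = band_of m b'"
    have b': "b' \<in> band m j" using that unfolding ones_def grid_def band_def j_def by auto
    have "if i = j then (m dvd a \<longleftrightarrow> \<not> m dvd b') else m dvd a \<and> m dvd b'"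
      using that mem_ones_iff[OF a b'] by simp
    then have "i = j" "m dvd b'" using v(3) by (cases "i = j"; simp)+
    then show "b' = b" using band_dvd_eq[OF i b \<open>m dvd b\<close>] band_dvd_eq[OF i, of b'] b' by simp
  qed
  then have "({a} \<times> {1..m^2}) \<inter> ones m \<subseteq> {(a, b)}" by auto
  moreover have "(a, b) \<in> ({a} \<times> {1..m^2}) \<inter> ones m" using v(1) \<open>b \<in> {1..m^2}\<close> by simp
  ultimately show ?thesis by blast
qed

lemma ones_unique_in_block:
  assumes v: "(a, b) \<in> ones m" "band_of m a \<noteq> band_of m b"
  shows "block_of m (a, b) \<inter> ones m = {(a, b)}"
proof -
  define i j where "i = band_of m a" and "j = band_of m b"
  have ab: "a \<in> band m i" "b \<in> band m j" using v unfolding ones_def grid_def band_def i_def j_def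
    by auto
  then have ij: "i \<in> {1..m}" "j \<in> {1..m}" using band_of_in_range unfolding i_def j_def band_def
    by blast+
  have corner: "(x, y) = (i * m, j * m)" if "(x, y) \<in> block_of m (a, b) \<inter> ones m" for x y
  proof -
    have xy: "x \<in> band m i" "y \<in> band m j" using that unfolding block_of_def i_def j_def by auto
    then have "m dvd x" "m dvd y" using that mem_ones_iff[OF xy] v(2) unfolding i_def j_def by auto
    then show ?thesis using band_dvd_eq ij xy by simp
  qed
  have "(a, b) \<in> block_of m (a, b) \<inter> ones m" using ab v(1) unfolding block_of_def i_def j_def
    by simp
  then show ?thesis using corner[of a b] corner by auto
qed

lemma ones_unique_in_edge:
  assumes v: "v \<in> ones m"
  shows "\<exists>e\<in>snd (SUD m). e \<inter> ones m = {v}"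
proof -
  obtain a b where ab: "v = (a, b)" by (cases v)
  have a: "a \<in> {1..m^2}" and b: "b \<in> {1..m^2}" using v ab unfolding ones_def grid_def by auto
  consider "band_of m a = band_of m b" "\<not> m dvd a" | "band_of m a = band_of m b" "\<not> m dvd b"
    | "band_of m a \<noteq> band_of m b"
    using v ab by (cases "band_of m a = band_of m b") (auto simp: ones_def)
  then show ?thesis
  proof cases
    case 1
    then have "({a} \<times> {1..m^2}) \<inter> ones m = {v}" using ones_unique_in_row[of a b] v ab by simp
    then show ?thesis using row_in_SUD[OF a] by blast
  next
    case 2
    have "(b, a) \<in> ones m" using swap_mem_ones_iff[of v m] v ab by simp
    then have "({b} \<times> {1..m^2}) \<inter> ones m = {(b, a)}" using ones_unique_in_row[of b a] 2 by simp
    moreover have "({1..m^2} \<times> {b}) \<inter> ones m = prod.swap ` (({b} \<times> {1..m^2}) \<inter> ones m)"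
      by (simp add: image_Int[OF inj_swap] product_swap swap_ones)
    ultimately have "({1..m^2} \<times> {b}) \<inter> ones m = {v}" using ab by simp
    then show ?thesis using col_in_SUD[OF b] by blast
  next
    case 3
    then have "block_of m (a, b) \<inter> ones m = {v}" using ones_unique_in_block[of a b] v ab by simp
    moreover have "block_of m (a, b) \<in> snd (SUD m)"
      unfolding block_of_def fst_conv snd_conv using band_of_in_range[OF a] band_of_in_range[OF b]
        by (rule block_in_SUD)
    ultimately show ?thesis by blast
  qed
qed

lemma ones_complement_determining: "determining_set (SUD m) (ones_colouring m) (grid m - ones m)"
  unfolding determining_set_def
proof (intro conjI allI impI ballI)
  show "grid m - ones m \<subseteq> fst (SUD m)" unfolding SUD_eq by auto
  fix c v assume "chi_colouring (SUD m) c \<and> (\<forall>w\<in>grid m - ones m. c w = ones_colouring m w)"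
    and v: "v \<in> fst (SUD m)"
  then have col: "is_colouring (SUD m) 2 c"
    and agree: "\<And>w. w \<in> grid m - ones m \<Longrightarrow> c w = ones_colouring m w"
    unfolding chi_colouring_SUD_iff by blast+
  show "c v = ones_colouring m v"
  proof (cases "v \<in> ones m")
    case True
    obtain e where e: "e \<in> snd (SUD m)" "e \<inter> ones m = {v}" using ones_unique_in_edge[OF True]
      by blast
    have others: "c w = 2" if "w \<in> e" "w \<noteq> v" for w
    proof -
      have "w \<in> grid m - ones m" using that e SUD_edge_subset_grid[OF e(1)] by blast
      then show ?thesis using agree unfolding ones_colouring_def by simp
    qed
    have "v \<in> e" using e(2) by blast
    have "\<not> (\<forall>w\<in>e. c w = 2)" using col e(1) unfolding is_colouring_def by blast
    then have "c v \<noteq> 2" using others by blast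
    moreover have "c v \<in> {1..2}" using col v unfolding is_colouring_def by blast
    ultimately show ?thesis using True unfolding ones_colouring_def by simp
  next
    case False
    then show ?thesis using agree v unfolding SUD_eq by simp
  qed
qed

lemma not_lonely_outside_ones:
  assumes e: "e \<in> snd (SUD m)" and v: "v \<notin> ones m"
  shows "\<not> lonely (ones_colouring m) e v"
proof
  assume "lonely (ones_colouring m) e v"
  moreover obtain y y' where "y \<in> e - ones m" "y' \<in> e - ones m" "y \<noteq> y'"
    using SUD_edge_two_outside_ones[OF e] by blast
  ultimately show False using v unfolding lonely_def ones_colouring_def by (metis Diff_iff)
qed

lemma ones_complement_least:
  assumes S: "determining_set (SUD m) (ones_colouring m) S"
  shows "grid m - ones m \<subseteq> S"
proof
  fix v assume v: "v \<in> grid m - ones m"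
  show "v \<in> S"
  proof (rule ccontr)
    assume "v \<notin> S"
    moreover have "chi_colouring (SUD m) (ones_colouring m)"
      using is_colouring_ones chi_colouring_SUD_iff by simp
    moreover have "v \<in> fst (SUD m)" using v unfolding SUD_eq by simp
    ultimately obtain e where "e \<in> snd (SUD m)" "lonely (ones_colouring m) e v"
      using lonely_if_not_in_determining_set[OF chi_SUD _ S] by blast
    then show False using not_lonely_outside_ones v by blast
  qed
qed

lemma card_ones: "3 * m^2 - 3 * m \<le> card (ones m)"
proof -
  define N where "N = {a \<in> {1..m * m}. \<not> m dvd a}"
  define U where "U = (\<lambda>a. (a, band_of m a * m)) ` N"
  define Z where "Z = (\<lambda>p. (fst p * m, snd p * m)) ` {p \<in> {1..m} \<times> {1..m}. fst p \<noteq> snd p}"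
  have "0 < m" using m by simp
  have "card N = m * m - m" unfolding N_def by (rule card_non_multiples[OF \<open>0 < m\<close>])
  then have card_U: "card U = m * m - m" unfolding U_def by (simp add: card_image inj_on_def)
  have card_Z: "card Z = m * m - m"
    unfolding Z_def using \<open>0 < m\<close> card_off_diagonal[of "{1..m}"]
    by (subst card_image) (auto simp: inj_on_def)
  have U_ones: "U \<subseteq> ones m"
  proof
    fix v assume "v \<in> U"
    then obtain a where a: "a \<in> N" "v = (a, band_of m a * m)" unfolding U_def by blast
    then have i: "band_of m a \<in> {1..m}" and "a \<in> band m (band_of m a)"
      using band_of_in_range unfolding N_def band_def by (auto simp: power2_eq_square)
    then show "v \<in> ones m"
      using mem_ones_iff[OF \<open>a \<in> band m (band_of m a)\<close> multiple_in_band[OF i]] a unfolding N_def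
        by simp
  qed
  have Z_ones: "Z \<subseteq> ones m"
  proof
    fix v assume "v \<in> Z"
    then obtain i j where ij: "i \<in> {1..m}" "j \<in> {1..m}" "i \<noteq> j" "v = (i * m, j * m)"
      unfolding Z_def by auto
    then show "v \<in> ones m"
      using mem_ones_iff[OF multiple_in_band[OF ij(1)] multiple_in_band[OF ij(2)]] by simp
  qed
  have "U \<inter> prod.swap ` U = {}" "(U \<union> prod.swap ` U) \<inter> Z = {}"
    unfolding U_def Z_def N_def by auto
  moreover have "finite U" "finite Z" unfolding U_def Z_def N_def by auto
  ultimately have "card (U \<union> prod.swap ` U \<union> Z) = 3 * (m * m - m)"
    using card_U card_Z by (simp add: card_Un_disjoint card_image)
  moreover have "U \<union> prod.swap ` U \<union> Z \<subseteq> ones m" using U_ones Z_ones swap_ones by blast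
  moreover have "finite (ones m)" unfolding ones_def grid_def by simp
  ultimately have "3 * (m * m - m) \<le> card (ones m)" by (metis card_mono)
  then show ?thesis by (simp add: power2_eq_square diff_mult_distrib2)
qed

lemma card_grid_minus_ones: "card (grid m - ones m) \<le> m^4 - 3 * m^2 + 3 * m"
proof -
  have "ones m \<subseteq> grid m" "finite (grid m)" unfolding ones_def grid_def by auto
  then have "card (grid m - ones m) = m^4 - card (ones m)"
    by (simp add: card_Diff_subset finite_subset card_grid)
  then show ?thesis using card_ones square_bounds by linarith
qed

end

theorem proposition7:
  fixes m :: nat
  assumes "m \<ge> 3"
  shows "sn (SUD m) = m^4 - 3*m^2 + 3*m \<and> lcs_lower (SUD m) = m^4 - 3*m^2 + 3*m"
proof (rule sn_lcs_lower_eqI)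
  show "finite (fst (SUD m))" by (simp add: fst_SUD grid_def)
  show "m^4 - 3*m^2 + 3*m \<le> card S" if "chi_colouring (SUD m) c" "determining_set (SUD m) c S"
    for c S
    using determining_set_card_ge[OF assms that] by simp
  show "chi_colouring (SUD m) (ones_colouring m)"
    using is_colouring_ones[OF assms] chi_colouring_SUD_iff[OF assms] by blast
  show "determining_set (SUD m) (ones_colouring m) (grid m - ones m)"
    by (rule ones_complement_determining[OF assms])
  show "card (grid m - ones m) \<le> m^4 - 3*m^2 + 3*m"
    using card_grid_minus_ones[OF assms] by simp
  show "grid m - ones m \<subseteq> S" if "determining_set (SUD m) (ones_colouring m) S" for S
    using ones_complement_least[OF assms that] .
qed

end
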